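(* Let $\Bbbk$ be a field of characteristic $\neq 2$ and let $A_1,\dots,A_m\in\Bbbk^{n\times n}$ be symmetric matrices. Fix an integer $t\ge 1$. The map sending an ordered simultaneous block decomposition $(V_1,\dots,V_t)$ of $A_1,\dots,A_m$ to the $t$-tuple $(\epsilon_1,\dots,\epsilon_t)$, where $\epsilon_j\in\Bbbk^{n\times n}$ is the projection of $\Bbbk^n$ onto $V_j$ along $\bigoplus_{l\neq j}V_l$, is a bijection from the set of ordered simultaneous block decompositions of length $t$ of $A_1,\dots,A_m$ onto the set of ordered complete sets of $t$ orthogonal idempotents of $Z(A_1,\dots,A_m)$. In particular, $A_1,\dots,A_m$ admit a simultaneous block diagonalization via congruence with $t$ blocks, i.e. there are $P\in \mathrm{GL}_n(\Bbbk)$ and $n_1,\dots,n_t\ge 1$ with $\sum_j n_j=n$ such that every $P^TA_iP$ is block diagonal with diagonal blocks of sizes $n_1,\dots,n_t$, if and only if $Z(A_1,\dots,A_m)$ contains a complete set of $t$ orthogonal idempotents.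
   Context: The center of symmetric matrices $A_1,\dots,A_m\in\Bbbk^{n\times n}$ is $Z(A_1,\dots,A_m)=\{X\in\Bbbk^{n\times n} : (A_iX)^T=A_iX \text{ for all } 1\le i\le m\}$. An ordered simultaneous block decomposition of length $t$ of $A_1,\dots,A_m$ is a $t$-tuple $(V_1,\dots,V_t)$ of nonzero subspaces of $\Bbbk^n$ with $\Bbbk^n=V_1\oplus\cdots\oplus V_t$ such that $x^TA_iy=0$ for all $i$, all $j\neq l$, all $x\in V_j$, $y\in V_l$ (equivalently, if $P$ is an invertible matrix whose columns are a basis of $V_1$ followed by a basis of $V_2$, etc., then each $P^TA_iP$ is block diagonal with blocks of sizes $\dim V_1,\dots,\dim V_t$). An ordered complete set of $t$ orthogonal idempotents of $Z(A_1,\dots,A_m)$ is a $t$-tuple $(\epsilon_1,\dots,\epsilon_t)$ of nonzero matrices in $Z(A_1,\dots,A_m)$ with $\epsilon_j^2=\epsilon_j$ for all $j$, $\epsilon_j\epsilon_l=0$ for $j\neq l$, and $\sum_j\epsilon_j=I_n$ (matrix products). *)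

theory Defs
  imports "Jordan_Normal_Form.Matrix"
begin

text \<open>Matrices are JNF matrices of dimension n x n over a field; the symmetric
  matrices A_1..A_m are given as a list As (m = length As); t-tuples are
  functions on {..<t} (0-indexed), extensional outside {..<t}.\<close>

definition vsum :: "nat \<Rightarrow> (nat \<Rightarrow> 'a::comm_monoid_add vec) \<Rightarrow> nat set \<Rightarrow> 'a vec" where
  "vsum n f J = vec n (\<lambda>i. \<Sum>j\<in>J. f j $ i)"

definition msum :: "nat \<Rightarrow> (nat \<Rightarrow> 'a::comm_monoid_add mat) \<Rightarrow> nat set \<Rightarrow> 'a mat" where
  "msum n f J = mat n n (\<lambda>(i,k). \<Sum>j\<in>J. f j $$ (i,k))"

definition is_subspace :: "nat \<Rightarrow> 'a::field vec set \<Rightarrow> bool" where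
  "is_subspace n V \<longleftrightarrow> V \<subseteq> carrier_vec n \<and> 0\<^sub>v n \<in> V \<and>
     (\<forall>x\<in>V. \<forall>y\<in>V. x + y \<in> V) \<and> (\<forall>c. \<forall>x\<in>V. c \<cdot>\<^sub>v x \<in> V)"

definition center :: "nat \<Rightarrow> 'a::field mat list \<Rightarrow> 'a mat set" where
  "center n As = {X \<in> carrier_mat n n. \<forall>A\<in>set As. transpose_mat (A * X) = A * X}"

definition block_decomps :: "nat \<Rightarrow> 'a::field mat list \<Rightarrow> nat \<Rightarrow> (nat \<Rightarrow> 'a vec set) set" where
  "block_decomps n As t = {V. V \<in> ({..<t} \<rightarrow>\<^sub>E UNIV) \<and>
     (\<forall>j<t. is_subspace n (V j) \<and> V j \<noteq> {0\<^sub>v n}) \<and>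
     (\<forall>x\<in>carrier_vec n. \<exists>!f. f \<in> Pi\<^sub>E {..<t} V \<and> x = vsum n f {..<t}) \<and>
     (\<forall>A\<in>set As. \<forall>j<t. \<forall>l<t. j \<noteq> l \<longrightarrow>
        (\<forall>x\<in>V j. \<forall>y\<in>V l. x \<bullet> (A *\<^sub>v y) = 0))}"

definition dproj :: "nat \<Rightarrow> (nat \<Rightarrow> 'a::field vec set) \<Rightarrow> nat \<Rightarrow> nat \<Rightarrow> 'a vec \<Rightarrow> 'a vec" where
  "dproj n V t j x = (THE f. f \<in> Pi\<^sub>E {..<t} V \<and> x = vsum n f {..<t}) j"

definition proj_mat :: "nat \<Rightarrow> (nat \<Rightarrow> 'a::field vec set) \<Rightarrow> nat \<Rightarrow> nat \<Rightarrow> 'a mat" where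
  "proj_mat n V t j = mat n n (\<lambda>(i,k). dproj n V t j (unit_vec n k) $ i)"

definition proj_tuple :: "nat \<Rightarrow> nat \<Rightarrow> (nat \<Rightarrow> 'a::field vec set) \<Rightarrow> (nat \<Rightarrow> 'a mat)" where
  "proj_tuple n t V = (\<lambda>j\<in>{..<t}. proj_mat n V t j)"

definition orth_idems :: "nat \<Rightarrow> 'a::field mat list \<Rightarrow> nat \<Rightarrow> (nat \<Rightarrow> 'a mat) set" where
  "orth_idems n As t = {e. e \<in> ({..<t} \<rightarrow>\<^sub>E center n As) \<and>
     (\<forall>j<t. e j \<noteq> 0\<^sub>m n n \<and> e j * e j = e j) \<and>
     (\<forall>j<t. \<forall>l<t. j \<noteq> l \<longrightarrow> e j * e l = 0\<^sub>m n n) \<and>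
     msum n e {..<t} = 1\<^sub>m n}"

end

theory Submission
  imports Defs "Jordan_Normal_Form.Matrix_Kernel" "Jordan_Normal_Form.DL_Rank"
begin

text \<open>
  A decomposition \<open>k\<^sup>n = V\<^sub>1 \<oplus> \<dots> \<oplus> V\<^sub>t\<close> and the tuple of its projections \<open>\<epsilon>\<^sub>j\<close>
  determine each other: the \<open>\<epsilon>\<^sub>j\<close> are orthogonal idempotents summing to \<open>1\<close>, and conversely
  the ranges of such idempotents form a direct sum decomposition. The orthogonality condition
  \<open>x\<^sup>T A\<^sub>i y = 0\<close> for \<open>x \<in> V\<^sub>j\<close>, \<open>y \<in> V\<^sub>l\<close>, \<open>j \<noteq> l\<close> says exactly that every \<open>\<epsilon>\<^sub>j\<close> is
  self-adjoint for the symmetric bilinear forms of the \<open>A\<^sub>i\<close>, i.e. that \<open>A\<^sub>i \<epsilon>\<^sub>j\<close> is symmetric,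
  i.e. that \<open>\<epsilon>\<^sub>j\<close> lies in the center.

  Concatenating bases of the blocks \<open>V\<^sub>j\<close> gives an invertible \<open>P\<close> for which every \<open>P\<^sup>T A\<^sub>i P\<close> is
  block diagonal. Conversely, if all \<open>P\<^sup>T A\<^sub>i P\<close> are block diagonal, the diagonal 0/1 matrices
  \<open>D\<^sub>j\<close> selecting the \<open>j\<close>-th block commute with them, and \<open>P D\<^sub>j P\<^sup>-\<^sup>1\<close> is a complete set of
  orthogonal idempotents of the center.
\<close>

lemma vsum_carrier [simp]: "vsum n f J \<in> carrier_vec n"
  and dim_vsum [simp]: "dim_vec (vsum n f J) = n"
  and index_vsum [simp]: "i < n \<Longrightarrow> vsum n f J $ i = (\<Sum>j\<in>J. f j $ i)"
  unfolding vsum_def by auto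

lemma msum_carrier [simp]: "msum n f J \<in> carrier_mat n n"
  and dim_msum [simp]: "dim_row (msum n f J) = n" "dim_col (msum n f J) = n"
  and index_msum [simp]: "i < n \<Longrightarrow> k < n \<Longrightarrow> msum n f J $$ (i,k) = (\<Sum>j\<in>J. f j $$ (i,k))"
  unfolding msum_def by auto

lemma vsum_cong: "(\<And>j. j \<in> J \<Longrightarrow> f j = g j) \<Longrightarrow> vsum n f J = vsum n g J"
  unfolding vsum_def by auto

lemma vsum_restrict [simp]: "vsum n (restrict f J) J = vsum n f J"
  by (rule vsum_cong) simp

lemma msum_restrict [simp]: "msum n (restrict f J) J = msum n f J"
  unfolding msum_def by simp

lemma vsum_delta:
  assumes "finite J" "j \<in> J" "v \<in> carrier_vec n"
  shows "vsum n (\<lambda>l. if l = j then v else 0\<^sub>v n) J = v"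
proof (rule eq_vecI)
  fix i assume "i < dim_vec v"
  then have "(\<Sum>l\<in>J. (if l = j then v else 0\<^sub>v n) $ i) = (\<Sum>l\<in>J. if l = j then v $ i else 0)"
    using assms by (intro sum.cong) auto
  then show "vsum n (\<lambda>l. if l = j then v else 0\<^sub>v n) J $ i = v $ i"
    using assms \<open>i < dim_vec v\<close> by simp
qed (use assms in simp)

lemma mult_zero_mat_vec [simp]: "v \<in> carrier_vec n \<Longrightarrow> 0\<^sub>m m n *\<^sub>v v = (0\<^sub>v m :: 'a::semiring_0 vec)"
  by (rule eq_vecI) (auto simp: scalar_prod_def)

lemma mult_mat_vec_zero [simp]: "A \<in> carrier_mat m n \<Longrightarrow> A *\<^sub>v 0\<^sub>v n = (0\<^sub>v m :: 'a::semiring_0 vec)"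
  by (rule eq_vecI) (auto simp: scalar_prod_def)

lemma index_mult_mat_vec_sum:
  "M \<in> carrier_mat m n \<Longrightarrow> x \<in> carrier_vec n \<Longrightarrow> i < m \<Longrightarrow>
   (M *\<^sub>v x) $ i = (\<Sum>k<n. M $$ (i,k) * x $ k)"
  by (simp add: scalar_prod_def lessThan_atLeast0)

lemma index_mult_mat_vec_unit_vec:
  fixes A :: "'a::semiring_1 mat"
  assumes "A \<in> carrier_mat m n" "i < m" "k < n"
  shows "(A *\<^sub>v unit_vec n k) $ i = A $$ (i,k)"
  using assms by (simp add: scalar_prod_right_unit)

lemma index_mat_eq_scalar_prod_unit_vec:
  fixes A :: "'a::comm_semiring_1 mat"
  assumes "A \<in> carrier_mat m n" "i < m" "k < n"
  shows "A $$ (i,k) = unit_vec m i \<bullet> (A *\<^sub>v unit_vec n k)"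
  using assms by (simp add: index_mult_mat_vec_unit_vec)

lemma mat_eqI_mult_vec:
  fixes A B :: "'a::semiring_1 mat"
  assumes A: "A \<in> carrier_mat m n" and B: "B \<in> carrier_mat m n"
    and eq: "\<And>x. x \<in> carrier_vec n \<Longrightarrow> A *\<^sub>v x = B *\<^sub>v x"
  shows "A = B"
proof (rule eq_matI)
  fix i k assume "i < dim_row B" "k < dim_col B"
  with A B eq[of "unit_vec n k"] show "A $$ (i,k) = B $$ (i,k)"
    by (metis carrier_matD index_mult_mat_vec_unit_vec unit_vec_carrier)
qed (use A B in auto)

lemma msum_mult_mat_vec:
  fixes f :: "nat \<Rightarrow> 'a::comm_semiring_0 mat"
  assumes "\<And>j. j \<in> J \<Longrightarrow> f j \<in> carrier_mat n n" and x: "x \<in> carrier_vec n"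
  shows "msum n f J *\<^sub>v x = vsum n (\<lambda>j. f j *\<^sub>v x) J"
proof (rule eq_vecI)
  fix i assume "i < dim_vec (vsum n (\<lambda>j. f j *\<^sub>v x) J)"
  then have i: "i < n" by simp
  have "(msum n f J *\<^sub>v x) $ i = (\<Sum>k<n. (\<Sum>j\<in>J. f j $$ (i,k)) * x $ k)"
    using i x by (simp add: scalar_prod_def lessThan_atLeast0)
  also have "\<dots> = (\<Sum>j\<in>J. \<Sum>k<n. f j $$ (i,k) * x $ k)"
    by (simp add: sum_distrib_right sum.swap[of _ J])
  also have "\<dots> = vsum n (\<lambda>j. f j *\<^sub>v x) J $ i"
    using i by (simp add: index_mult_mat_vec_sum[OF assms(1) x i])
  finally show "(msum n f J *\<^sub>v x) $ i = vsum n (\<lambda>j. f j *\<^sub>v x) J $ i" .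
qed (use x in auto)

lemma mult_mat_vec_vsum:
  fixes M :: "'a::comm_semiring_0 mat"
  assumes M: "M \<in> carrier_mat n n" and "\<And>j. j \<in> J \<Longrightarrow> g j \<in> carrier_vec n"
  shows "M *\<^sub>v vsum n g J = vsum n (\<lambda>j. M *\<^sub>v g j) J"
proof (rule eq_vecI)
  fix i assume "i < dim_vec (vsum n (\<lambda>j. M *\<^sub>v g j) J)"
  then have i: "i < n" by simp
  have "(M *\<^sub>v vsum n g J) $ i = (\<Sum>k<n. M $$ (i,k) * (\<Sum>j\<in>J. g j $ k))"
    using i M by (simp add: scalar_prod_def lessThan_atLeast0)
  also have "\<dots> = (\<Sum>j\<in>J. \<Sum>k<n. M $$ (i,k) * g j $ k)"
    by (simp add: sum_distrib_left sum.swap[of _ J])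
  also have "\<dots> = vsum n (\<lambda>j. M *\<^sub>v g j) J $ i"
    using i by (simp add: index_mult_mat_vec_sum[OF M assms(2) i])
  finally show "(M *\<^sub>v vsum n g J) $ i = vsum n (\<lambda>j. M *\<^sub>v g j) J $ i" .
qed (use M in auto)

lemma scalar_prod_vsum_left:
  fixes g :: "nat \<Rightarrow> 'a::comm_semiring_0 vec"
  assumes w: "w \<in> carrier_vec n"
  shows "vsum n g J \<bullet> w = (\<Sum>j\<in>J. g j \<bullet> w)"
  using w by (simp add: scalar_prod_def lessThan_atLeast0 sum_distrib_right sum.swap[of _ J])

lemma is_subspaceD:
  assumes "is_subspace n W"
  shows "W \<subseteq> carrier_vec n" "0\<^sub>v n \<in> W" "\<And>x y. x \<in> W \<Longrightarrow> y \<in> W \<Longrightarrow> x + y \<in> W"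
    "\<And>c x. x \<in> W \<Longrightarrow> c \<cdot>\<^sub>v x \<in> W"
  using assms unfolding is_subspace_def by auto

lemma subspace_vsum:
  assumes W: "is_subspace n W" and "finite K" and "\<And>k. k \<in> K \<Longrightarrow> w k \<in> W"
  shows "vsum n w K \<in> W"
  using assms(2,3)
proof (induction K rule: finite_induct)
  case empty
  have "vsum n w {} = 0\<^sub>v n" by (rule eq_vecI) auto
  then show ?case using is_subspaceD(2)[OF W] by simp
next
  case (insert k K)
  have "w k \<in> carrier_vec n" using insert.prems is_subspaceD(1)[OF W] by auto
  then have "vsum n w (insert k K) = w k + vsum n w K"
    by (intro eq_vecI) (use insert.hyps in auto)
  then show ?case using is_subspaceD(3)[OF W] insert by auto
qed

lemma range_mult_mat_vec_subspace:
  fixes A :: "'a::field mat"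
  assumes A: "A \<in> carrier_mat n n"
  shows "is_subspace n ((*\<^sub>v) A ` carrier_vec n)"
  unfolding is_subspace_def
proof (intro conjI ballI allI)
  show "(*\<^sub>v) A ` carrier_vec n \<subseteq> carrier_vec n" using A by auto
  show "0\<^sub>v n \<in> (*\<^sub>v) A ` carrier_vec n"
    using A by (intro image_eqI[of _ _ "0\<^sub>v n"]) auto
  fix x y assume "x \<in> (*\<^sub>v) A ` carrier_vec n" "y \<in> (*\<^sub>v) A ` carrier_vec n"
  then obtain u w where "u \<in> carrier_vec n" "w \<in> carrier_vec n" "x = A *\<^sub>v u" "y = A *\<^sub>v w"
    by blast
  then show "x + y \<in> (*\<^sub>v) A ` carrier_vec n"
    using A by (intro image_eqI[of _ _ "u + w"]) (auto simp: mult_add_distrib_mat_vec)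
next
  fix c x assume "x \<in> (*\<^sub>v) A ` carrier_vec n"
  then obtain u where "u \<in> carrier_vec n" "x = A *\<^sub>v u" by blast
  then show "c \<cdot>\<^sub>v x \<in> (*\<^sub>v) A ` carrier_vec n"
    using A by (intro image_eqI[of _ _ "c \<cdot>\<^sub>v u"]) (auto simp: mult_mat_vec)
qed

lemma scalar_prod_symmetric_mat:
  fixes A :: "'a::comm_ring_1 mat"
  assumes A: "A \<in> carrier_mat n n" and sym: "transpose_mat A = A"
    and u: "u \<in> carrier_vec n" and w: "w \<in> carrier_vec n"
  shows "u \<bullet> (A *\<^sub>v w) = w \<bullet> (A *\<^sub>v u)"
proof -
  have "u \<bullet> (A *\<^sub>v w) = (transpose_mat A *\<^sub>v u) \<bullet> w"
    by (rule transpose_vec_mult_scalar[OF A w u, symmetric])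
  also have "\<dots> = w \<bullet> (A *\<^sub>v u)" using sym A u w by (simp add: comm_scalar_prod[of _ n])
  finally show ?thesis .
qed

lemma transpose_mat_eqI_scalar_prod:
  fixes B :: "'a::comm_ring_1 mat"
  assumes B: "B \<in> carrier_mat n n"
    and sym: "\<And>x y. x \<in> carrier_vec n \<Longrightarrow> y \<in> carrier_vec n \<Longrightarrow> x \<bullet> (B *\<^sub>v y) = y \<bullet> (B *\<^sub>v x)"
  shows "transpose_mat B = B"
proof (rule eq_matI)
  fix a b assume "a < dim_row B" "b < dim_col B"
  then have ab: "a < n" "b < n" using B by auto
  have "transpose_mat B $$ (a,b) = unit_vec n b \<bullet> (B *\<^sub>v unit_vec n a)"
    using ab B by (simp add: index_mult_mat_vec_unit_vec)
  also have "\<dots> = unit_vec n a \<bullet> (B *\<^sub>v unit_vec n b)" by (rule sym) simp_all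
  also have "\<dots> = B $$ (a,b)" by (rule index_mat_eq_scalar_prod_unit_vec[OF B ab, symmetric])
  finally show "transpose_mat B $$ (a,b) = B $$ (a,b)" .
qed (use B in auto)

section \<open>Block decompositions and their projections\<close>

lemma block_decompsD:
  assumes "V \<in> block_decomps n As t"
  shows "V \<in> {..<t} \<rightarrow>\<^sub>E UNIV" "\<And>j. j < t \<Longrightarrow> is_subspace n (V j)"
    "\<And>j. j < t \<Longrightarrow> V j \<noteq> {0\<^sub>v n}"
    "\<And>x. x \<in> carrier_vec n \<Longrightarrow> \<exists>!f. f \<in> Pi\<^sub>E {..<t} V \<and> x = vsum n f {..<t}"
    "\<And>A j l x y. A \<in> set As \<Longrightarrow> j < t \<Longrightarrow> l < t \<Longrightarrow> j \<noteq> l \<Longrightarrow> x \<in> V j \<Longrightarrow> y \<in> V l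
       \<Longrightarrow> x \<bullet> (A *\<^sub>v y) = 0"
proof -
  note h = assms[unfolded block_decomps_def mem_Collect_eq]
  show "V \<in> {..<t} \<rightarrow>\<^sub>E UNIV" "\<And>j. j < t \<Longrightarrow> is_subspace n (V j)"
    "\<And>j. j < t \<Longrightarrow> V j \<noteq> {0\<^sub>v n}"
    "\<And>x. x \<in> carrier_vec n \<Longrightarrow> \<exists>!f. f \<in> Pi\<^sub>E {..<t} V \<and> x = vsum n f {..<t}"
    using h by simp_all
  show "\<And>A j l x y. A \<in> set As \<Longrightarrow> j < t \<Longrightarrow> l < t \<Longrightarrow> j \<noteq> l \<Longrightarrow> x \<in> V j \<Longrightarrow> y \<in> V l
       \<Longrightarrow> x \<bullet> (A *\<^sub>v y) = 0"
    using h[THEN conjunct2, THEN conjunct2, THEN conjunct2] by blast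
qed

lemma block_decomp_carrier:
  "V \<in> block_decomps n As t \<Longrightarrow> j < t \<Longrightarrow> v \<in> V j \<Longrightarrow> v \<in> carrier_vec n"
  using is_subspaceD(1)[OF block_decompsD(2)] by blast

lemma dproj_eqI:
  assumes V: "V \<in> block_decomps n As t" and g: "g \<in> Pi\<^sub>E {..<t} V" and x: "vsum n g {..<t} = x"
  shows "dproj n V t j x = g j"
proof -
  have "\<exists>!f. f \<in> Pi\<^sub>E {..<t} V \<and> x = vsum n f {..<t}"
    using block_decompsD(4)[OF V, of x] x by (metis vsum_carrier)
  then have "(THE f. f \<in> Pi\<^sub>E {..<t} V \<and> x = vsum n f {..<t}) = g"
    by (rule the1_equality) (use g x in simp)
  then show ?thesis unfolding dproj_def by simp
qed

lemma dproj_decomp: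
  assumes V: "V \<in> block_decomps n As t" and x: "x \<in> carrier_vec n"
  shows "j < t \<Longrightarrow> dproj n V t j x \<in> V j"
    and "vsum n (\<lambda>j. dproj n V t j x) {..<t} = x"
proof -
  obtain f where f: "f \<in> Pi\<^sub>E {..<t} V" "x = vsum n f {..<t}"
    using block_decompsD(4)[OF V x] by blast
  have "dproj n V t j x = f j" for j using dproj_eqI[OF V f(1) f(2)[symmetric]] .
  with f show "j < t \<Longrightarrow> dproj n V t j x \<in> V j"
    and "vsum n (\<lambda>j. dproj n V t j x) {..<t} = x" by (auto intro: vsum_cong)
qed

lemma proj_mat_carrier [simp]: "proj_mat n V t j \<in> carrier_mat n n"
  and dim_proj_mat [simp]: "dim_row (proj_mat n V t j) = n" "dim_col (proj_mat n V t j) = n"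
  unfolding proj_mat_def by simp_all

lemma proj_mat_mult_vec_carrier [simp]: "x \<in> carrier_vec n \<Longrightarrow> proj_mat n V t j *\<^sub>v x \<in> carrier_vec n"
  by (rule mult_mat_vec_carrier[OF proj_mat_carrier])

lemma proj_mat_mult_vec:
  assumes V: "V \<in> block_decomps n As t" and x: "x \<in> carrier_vec n" and j: "j < t"
  shows "proj_mat n V t j *\<^sub>v x = dproj n V t j x"
proof -
  let ?M = "proj_mat n V t"
  let ?u = "\<lambda>k l. dproj n V t l (unit_vec n k)"
  have u: "?u k l \<in> V l" if "l < t" for k l by (rule dproj_decomp(1)[OF V unit_vec_carrier that])
  have uc: "?u k l \<in> carrier_vec n" if "l < t" for k l by (rule block_decomp_carrier[OF V that u[OF that]])
  have expand: "?M l *\<^sub>v x = vsum n (\<lambda>k. x $ k \<cdot>\<^sub>v ?u k l) {..<n}" if l: "l < t" for l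
  proof (rule eq_vecI)
    fix i assume "i < dim_vec (vsum n (\<lambda>k. x $ k \<cdot>\<^sub>v ?u k l) {..<n})"
    then have i: "i < n" by simp
    have "(?M l *\<^sub>v x) $ i = (\<Sum>k<n. ?M l $$ (i,k) * x $ k)"
      by (rule index_mult_mat_vec_sum[OF proj_mat_carrier x i])
    also have "\<dots> = (\<Sum>k<n. (x $ k \<cdot>\<^sub>v ?u k l) $ i)"
      using i by (intro sum.cong) (auto simp: proj_mat_def mult.commute carrier_vecD[OF uc[OF l]])
    finally show "(?M l *\<^sub>v x) $ i = vsum n (\<lambda>k. x $ k \<cdot>\<^sub>v ?u k l) {..<n} $ i" using i by simp
  qed simp
  have mem: "?M l *\<^sub>v x \<in> V l" if l: "l < t" for l
    unfolding expand[OF l]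
    by (rule subspace_vsum[OF block_decompsD(2)[OF V l]])
       (auto intro: is_subspaceD(4)[OF block_decompsD(2)[OF V l]] u[OF l])
  have sum: "vsum n (\<lambda>l. ?M l *\<^sub>v x) {..<t} = x"
  proof (rule eq_vecI)
    fix i assume "i < dim_vec x"
    then have i: "i < n" using x by simp
    have "vsum n (\<lambda>l. ?M l *\<^sub>v x) {..<t} $ i = (\<Sum>l<t. \<Sum>k<n. x $ k * ?u k l $ i)"
      using i by (auto intro!: sum.cong simp: expand carrier_vecD[OF uc])
    also have "\<dots> = (\<Sum>k<n. x $ k * (\<Sum>l<t. ?u k l $ i))"
      by (simp add: sum.swap[of _ "{..<t}"] sum_distrib_left)
    also have "\<dots> = (\<Sum>k<n. x $ k * unit_vec n k $ i)"
      using dproj_decomp(2)[OF V unit_vec_carrier] i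
      by (intro sum.cong refl) (metis index_vsum)
    also have "\<dots> = x $ i" using i by (simp add: if_distrib[of "(*) _"] cong: if_cong)
    finally show "vsum n (\<lambda>l. ?M l *\<^sub>v x) {..<t} $ i = x $ i" .
  qed (use x in auto)
  have "(\<lambda>l\<in>{..<t}. ?M l *\<^sub>v x) \<in> Pi\<^sub>E {..<t} V" using mem by auto
  moreover have "vsum n (\<lambda>l\<in>{..<t}. ?M l *\<^sub>v x) {..<t} = x" using sum by (simp only: vsum_restrict)
  ultimately have "dproj n V t j x = (\<lambda>l\<in>{..<t}. ?M l *\<^sub>v x) j" by (rule dproj_eqI[OF V])
  then show ?thesis using j by simp
qed

lemma proj_mat_mult_vec_mem:
  assumes "V \<in> block_decomps n As t" "x \<in> carrier_vec n" "j < t"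
  shows "proj_mat n V t j *\<^sub>v x \<in> V j"
  using proj_mat_mult_vec[OF assms] dproj_decomp(1)[OF assms] by simp

lemma vsum_proj_mat_mult_vec:
  assumes V: "V \<in> block_decomps n As t" and x: "x \<in> carrier_vec n"
  shows "vsum n (\<lambda>j. proj_mat n V t j *\<^sub>v x) {..<t} = x"
proof -
  have "vsum n (\<lambda>j. proj_mat n V t j *\<^sub>v x) {..<t} = vsum n (\<lambda>j. dproj n V t j x) {..<t}"
    by (rule vsum_cong) (simp add: proj_mat_mult_vec[OF V x])
  then show ?thesis using dproj_decomp(2)[OF V x] by simp
qed

lemma proj_mat_mult_vec_block:
  assumes V: "V \<in> block_decomps n As t" and j: "j < t" and v: "v \<in> V j" and l: "l < t"
  shows "proj_mat n V t l *\<^sub>v v = (if l = j then v else 0\<^sub>v n)"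
proof -
  have vc: "v \<in> carrier_vec n" by (rule block_decomp_carrier[OF V j v])
  let ?g = "\<lambda>l\<in>{..<t}. if l = j then v else 0\<^sub>v n"
  have "?g \<in> Pi\<^sub>E {..<t} V" using v is_subspaceD(2)[OF block_decompsD(2)[OF V]] by auto
  moreover have "vsum n ?g {..<t} = v" using j vc by (simp only: vsum_restrict) (rule vsum_delta; simp)
  ultimately have "dproj n V t l v = ?g l" by (rule dproj_eqI[OF V])
  then show ?thesis using proj_mat_mult_vec[OF V vc l] l by simp
qed

lemma proj_mat_in_center:
  assumes V: "V \<in> block_decomps n As t" and j: "j < t"
    and dims: "\<forall>A\<in>set As. A \<in> carrier_mat n n" and sym: "\<forall>A\<in>set As. transpose_mat A = A"
  shows "proj_mat n V t j \<in> center n As"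
  unfolding center_def
proof (intro CollectI conjI ballI)
  let ?M = "proj_mat n V t j"
  fix A assume A: "A \<in> set As"
  have Ac: "A \<in> carrier_mat n n" using dims A by blast
  \<comment> \<open>only the component of \<open>x\<close> in \<open>V j\<close> pairs non-trivially with \<open>V j\<close>\<close>
  have component: "x \<bullet> (A *\<^sub>v (?M *\<^sub>v y)) = (?M *\<^sub>v x) \<bullet> (A *\<^sub>v (?M *\<^sub>v y))"
    if x: "x \<in> carrier_vec n" and y: "y \<in> carrier_vec n" for x y
  proof -
    let ?w = "A *\<^sub>v (?M *\<^sub>v y)"
    have "x \<bullet> ?w = vsum n (\<lambda>l. proj_mat n V t l *\<^sub>v x) {..<t} \<bullet> ?w"
      using vsum_proj_mat_mult_vec[OF V x] by simp
    also have "\<dots> = (\<Sum>l\<in>{..<t}. (proj_mat n V t l *\<^sub>v x) \<bullet> ?w)"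
      by (rule scalar_prod_vsum_left) (meson Ac y mult_mat_vec_carrier proj_mat_carrier)
    also have "\<dots> = (\<Sum>l\<in>{..<t}. if l = j then (?M *\<^sub>v x) \<bullet> ?w else 0)"
      using block_decompsD(5)[OF V A _ j _ proj_mat_mult_vec_mem[OF V x] proj_mat_mult_vec_mem[OF V y j]]
      by (intro sum.cong) auto
    also have "\<dots> = (?M *\<^sub>v x) \<bullet> ?w" using j by simp
    finally show ?thesis .
  qed
  show "transpose_mat (A * ?M) = A * ?M"
  proof (rule transpose_mat_eqI_scalar_prod)
    fix x y :: "'a vec" assume x: "x \<in> carrier_vec n" and y: "y \<in> carrier_vec n"
    have "x \<bullet> ((A * ?M) *\<^sub>v y) = x \<bullet> (A *\<^sub>v (?M *\<^sub>v y))"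
      using assoc_mult_mat_vec[OF Ac proj_mat_carrier y] by simp
    also have "\<dots> = (?M *\<^sub>v x) \<bullet> (A *\<^sub>v (?M *\<^sub>v y))" by (rule component[OF x y])
    also have "\<dots> = (?M *\<^sub>v y) \<bullet> (A *\<^sub>v (?M *\<^sub>v x))"
      using Ac sym A x y by (intro scalar_prod_symmetric_mat) auto
    also have "\<dots> = y \<bullet> (A *\<^sub>v (?M *\<^sub>v x))" by (rule component[OF y x, symmetric])
    also have "\<dots> = y \<bullet> ((A * ?M) *\<^sub>v x)"
      using assoc_mult_mat_vec[OF Ac proj_mat_carrier x] by simp
    finally show "x \<bullet> ((A * ?M) *\<^sub>v y) = y \<bullet> ((A * ?M) *\<^sub>v x)" .
  qed (use Ac in simp)
qed (use assms in simp)

lemma proj_mat_mult: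
  assumes V: "V \<in> block_decomps n As t" and j: "j < t" and l: "l < t"
  shows "proj_mat n V t j * proj_mat n V t l = (if j = l then proj_mat n V t j else 0\<^sub>m n n)"
proof (rule mat_eqI_mult_vec[of _ n n])
  fix x :: "'a vec" assume x: "x \<in> carrier_vec n"
  have "(proj_mat n V t j * proj_mat n V t l) *\<^sub>v x = proj_mat n V t j *\<^sub>v (proj_mat n V t l *\<^sub>v x)"
    by (rule assoc_mult_mat_vec[OF proj_mat_carrier proj_mat_carrier x])
  also have "\<dots> = (if j = l then proj_mat n V t l *\<^sub>v x else 0\<^sub>v n)"
    by (rule proj_mat_mult_vec_block[OF V l proj_mat_mult_vec_mem[OF V x l] j])
  finally show "(proj_mat n V t j * proj_mat n V t l) *\<^sub>v x =
      (if j = l then proj_mat n V t j else 0\<^sub>m n n) *\<^sub>v x"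
    using x by simp
qed auto

lemma proj_mat_nonzero:
  assumes V: "V \<in> block_decomps n As t" and j: "j < t"
  shows "proj_mat n V t j \<noteq> 0\<^sub>m n n"
proof
  assume zero: "proj_mat n V t j = 0\<^sub>m n n"
  obtain v where v: "v \<in> V j" "v \<noteq> 0\<^sub>v n"
    using block_decompsD(3)[OF V j] is_subspaceD(2)[OF block_decompsD(2)[OF V j]] by blast
  have "v = proj_mat n V t j *\<^sub>v v" using proj_mat_mult_vec_block[OF V j v(1) j] by simp
  also have "\<dots> = 0\<^sub>v n" using zero block_decomp_carrier[OF V j v(1)] by simp
  finally show False using v(2) by contradiction
qed

lemma msum_proj_mat:
  assumes V: "V \<in> block_decomps n As t"
  shows "msum n (proj_mat n V t) {..<t} = 1\<^sub>m n"
proof (rule mat_eqI_mult_vec[of _ n n])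
  fix x :: "'a vec" assume x: "x \<in> carrier_vec n"
  then show "msum n (proj_mat n V t) {..<t} *\<^sub>v x = 1\<^sub>m n *\<^sub>v x"
    by (simp add: msum_mult_mat_vec vsum_proj_mat_mult_vec[OF V x])
qed auto

lemma proj_tuple_in_orth_idems:
  assumes V: "V \<in> block_decomps n As t"
    and dims: "\<forall>A\<in>set As. A \<in> carrier_mat n n" and sym: "\<forall>A\<in>set As. transpose_mat A = A"
  shows "proj_tuple n t V \<in> orth_idems n As t"
proof -
  have "msum n (proj_tuple n t V) {..<t} = msum n (proj_mat n V t) {..<t}"
    unfolding proj_tuple_def by simp
  then show ?thesis
    unfolding orth_idems_def using proj_mat_in_center[OF V _ dims sym] proj_mat_nonzero[OF V]
      proj_mat_mult[OF V] msum_proj_mat[OF V]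
    by (auto simp: proj_tuple_def)
qed

section \<open>Orthogonal idempotents and their ranges\<close>

lemma orth_idemsD:
  assumes "e \<in> orth_idems n As t"
  shows "e \<in> {..<t} \<rightarrow>\<^sub>E center n As"
    "\<And>j. j < t \<Longrightarrow> e j \<noteq> 0\<^sub>m n n" "\<And>j. j < t \<Longrightarrow> e j * e j = e j"
    "\<And>j l. j < t \<Longrightarrow> l < t \<Longrightarrow> j \<noteq> l \<Longrightarrow> e j * e l = 0\<^sub>m n n"
    "msum n e {..<t} = 1\<^sub>m n"
  using assms unfolding orth_idems_def by simp_all

lemma orth_idems_carrier: "e \<in> orth_idems n As t \<Longrightarrow> j < t \<Longrightarrow> e j \<in> carrier_mat n n"
  using orth_idemsD(1) unfolding center_def by blast

lemma orth_idems_mult_vec: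
  assumes e: "e \<in> orth_idems n As t" and j: "j < t" and l: "l < t" and x: "x \<in> carrier_vec n"
  shows "e j *\<^sub>v (e l *\<^sub>v x) = (if j = l then e l *\<^sub>v x else 0\<^sub>v n)"
proof -
  have "e j *\<^sub>v (e l *\<^sub>v x) = (e j * e l) *\<^sub>v x"
    using assoc_mult_mat_vec[OF orth_idems_carrier[OF e j] orth_idems_carrier[OF e l] x] by simp
  then show ?thesis using orth_idemsD(3,4)[OF e] j l x by auto
qed

lemma vsum_orth_idems_mult_vec:
  assumes e: "e \<in> orth_idems n As t" and x: "x \<in> carrier_vec n"
  shows "vsum n (\<lambda>l. e l *\<^sub>v x) {..<t} = x"
proof -
  have "msum n e {..<t} *\<^sub>v x = vsum n (\<lambda>l. e l *\<^sub>v x) {..<t}"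
    by (rule msum_mult_mat_vec) (use orth_idems_carrier[OF e] x in auto)
  then show ?thesis using orth_idemsD(5)[OF e] x by simp
qed

definition idem_ranges :: "nat \<Rightarrow> nat \<Rightarrow> (nat \<Rightarrow> 'a::field mat) \<Rightarrow> nat \<Rightarrow> 'a vec set" where
  "idem_ranges n t e = (\<lambda>j\<in>{..<t}. (*\<^sub>v) (e j) ` carrier_vec n)"

lemma idem_ranges_decomp_unique:
  assumes e: "e \<in> orth_idems n As t"
    and g: "g \<in> Pi\<^sub>E {..<t} (idem_ranges n t e)" and x: "x = vsum n g {..<t}"
  shows "g = (\<lambda>l\<in>{..<t}. e l *\<^sub>v x)"
proof
  fix j
  show "g j = (\<lambda>l\<in>{..<t}. e l *\<^sub>v x) j"
  proof (cases "j < t")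
    case False
    then show ?thesis using g by (auto simp: PiE_def extensional_def)
  next
    case j: True
    have g_range: "\<exists>y\<in>carrier_vec n. g l = e l *\<^sub>v y" if "l < t" for l
      using PiE_mem[OF g, of l] that unfolding idem_ranges_def by auto
    have gc: "g l \<in> carrier_vec n" if "l \<in> {..<t}" for l
      using g_range[of l] that orth_idems_carrier[OF e, of l] by auto
    have "e j *\<^sub>v x = vsum n (\<lambda>l. e j *\<^sub>v g l) {..<t}"
      unfolding x by (rule mult_mat_vec_vsum[OF orth_idems_carrier[OF e j] gc])
    also have "\<dots> = vsum n (\<lambda>l. if l = j then g j else 0\<^sub>v n) {..<t}"
    proof (rule vsum_cong)
      fix l assume "l \<in> {..<t}"
      with g_range obtain y where "y \<in> carrier_vec n" "g l = e l *\<^sub>v y" by auto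
      then show "e j *\<^sub>v g l = (if l = j then g j else 0\<^sub>v n)"
        using orth_idems_mult_vec[OF e j _ \<open>y \<in> carrier_vec n\<close>, of l] \<open>l \<in> {..<t}\<close> by auto
    qed
    also have "\<dots> = g j" by (rule vsum_delta) (use j gc in auto)
    finally show ?thesis using j by simp
  qed
qed

lemma idem_ranges_in_block_decomps:
  assumes e: "e \<in> orth_idems n As t"
    and dims: "\<forall>A\<in>set As. A \<in> carrier_mat n n" and sym: "\<forall>A\<in>set As. transpose_mat A = A"
  shows "idem_ranges n t e \<in> block_decomps n As t"
proof -
  let ?V = "idem_ranges n t e"
  have range: "?V j = (*\<^sub>v) (e j) ` carrier_vec n" if "j < t" for j
    using that unfolding idem_ranges_def by simp
  have nonzero: "?V j \<noteq> {0\<^sub>v n}" if j: "j < t" for j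
  proof
    assume zero: "?V j = {0\<^sub>v n}"
    have "e j = 0\<^sub>m n n"
      by (rule mat_eqI_mult_vec[OF orth_idems_carrier[OF e j] zero_carrier_mat])
         (use zero range[OF j] in auto)
    then show False using orth_idemsD(2)[OF e j] by contradiction
  qed
  have decomp: "\<exists>!f. f \<in> Pi\<^sub>E {..<t} ?V \<and> x = vsum n f {..<t}" if x: "x \<in> carrier_vec n" for x
  proof
    show "(\<lambda>l\<in>{..<t}. e l *\<^sub>v x) \<in> Pi\<^sub>E {..<t} ?V \<and> x = vsum n (\<lambda>l\<in>{..<t}. e l *\<^sub>v x) {..<t}"
      using x range vsum_orth_idems_mult_vec[OF e x] by auto
  qed (use idem_ranges_decomp_unique[OF e] in blast)
  have orth: "u \<bullet> (A *\<^sub>v w) = 0"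
    if A: "A \<in> set As" and j: "j < t" and l: "l < t" and jl: "j \<noteq> l"
      and u: "u \<in> ?V j" and w: "w \<in> ?V l" for A j l u w
  proof -
    obtain x where x: "x \<in> carrier_vec n" "u = e j *\<^sub>v x" using u range[OF j] by auto
    obtain y where y: "y \<in> carrier_vec n" "w = e l *\<^sub>v y" using w range[OF l] by auto
    have Ac: "A \<in> carrier_mat n n" using dims A by blast
    have ej: "e j \<in> carrier_mat n n" and el: "e l \<in> carrier_mat n n"
      using orth_idems_carrier[OF e] j l by auto
    \<comment> \<open>\<open>e j\<close> is self-adjoint with respect to the symmetric form of \<open>A\<close>\<close>
    have "e j \<in> center n As" using orth_idemsD(1)[OF e] j by auto
    then have adjoint: "transpose_mat (e j) * A = A * e j"
      using transpose_mult[OF Ac ej] A sym unfolding center_def by auto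
    have wc: "w \<in> carrier_vec n" using y el by simp
    have "u \<bullet> (A *\<^sub>v w) = x \<bullet> (transpose_mat (e j) *\<^sub>v (A *\<^sub>v w))"
      using transpose_vec_mult_scalar[of "transpose_mat (e j)" n n "A *\<^sub>v w" x] x ej Ac wc by simp
    also have "\<dots> = x \<bullet> (A *\<^sub>v (e j *\<^sub>v w))"
      using assoc_mult_mat_vec[of "transpose_mat (e j)" n n A n w] assoc_mult_mat_vec[OF Ac ej wc]
        adjoint ej Ac wc by simp
    also have "e j *\<^sub>v w = 0\<^sub>v n" using orth_idems_mult_vec[OF e j l y(1)] y(2) jl by simp
    finally show ?thesis using x Ac by simp
  qed
  show ?thesis
    unfolding block_decomps_def mem_Collect_eq
    using range_mult_mat_vec_subspace[OF orth_idems_carrier[OF e]] range nonzero decomp orth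
    by (auto simp: idem_ranges_def)
qed

lemma proj_tuple_idem_ranges:
  assumes e: "e \<in> orth_idems n As t"
    and dims: "\<forall>A\<in>set As. A \<in> carrier_mat n n" and sym: "\<forall>A\<in>set As. transpose_mat A = A"
  shows "proj_tuple n t (idem_ranges n t e) = e"
proof
  fix j
  let ?V = "idem_ranges n t e"
  show "proj_tuple n t ?V j = e j"
  proof (cases "j < t")
    case False
    then show ?thesis using orth_idemsD(1)[OF e] by (auto simp: proj_tuple_def PiE_def extensional_def)
  next
    case j: True
    have V: "?V \<in> block_decomps n As t" by (rule idem_ranges_in_block_decomps[OF e dims sym])
    have "proj_mat n ?V t j = e j"
    proof (rule mat_eqI_mult_vec[OF proj_mat_carrier orth_idems_carrier[OF e j]])
      fix x :: "'a vec" assume x: "x \<in> carrier_vec n"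
      obtain f where f: "f \<in> Pi\<^sub>E {..<t} ?V" "x = vsum n f {..<t}"
        using block_decompsD(4)[OF V x] by blast
      have "proj_mat n ?V t j *\<^sub>v x = f j"
        using proj_mat_mult_vec[OF V x j] dproj_eqI[OF V f(1) f(2)[symmetric]] by simp
      also have "\<dots> = e j *\<^sub>v x" using idem_ranges_decomp_unique[OF e f] j by simp
      finally show "proj_mat n ?V t j *\<^sub>v x = e j *\<^sub>v x" .
    qed
    then show ?thesis using j unfolding proj_tuple_def by simp
  qed
qed

lemma idem_ranges_proj_tuple:
  assumes V: "V \<in> block_decomps n As t"
  shows "idem_ranges n t (proj_tuple n t V) = V"
proof
  fix j
  show "idem_ranges n t (proj_tuple n t V) j = V j"
  proof (cases "j < t")
    case False
    then show ?thesis using block_decompsD(1)[OF V] unfolding idem_ranges_def by (auto simp: PiE_def extensional_def)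
  next
    case j: True
    have "(*\<^sub>v) (proj_mat n V t j) ` carrier_vec n = V j"
    proof
      show "(*\<^sub>v) (proj_mat n V t j) ` carrier_vec n \<subseteq> V j"
        using proj_mat_mult_vec_mem[OF V _ j] by auto
      show "V j \<subseteq> (*\<^sub>v) (proj_mat n V t j) ` carrier_vec n"
      proof
        fix v assume v: "v \<in> V j"
        then have "v = proj_mat n V t j *\<^sub>v v" using proj_mat_mult_vec_block[OF V j v j] by simp
        then show "v \<in> (*\<^sub>v) (proj_mat n V t j) ` carrier_vec n"
          using block_decomp_carrier[OF V j v] by blast
      qed
    qed
    then show ?thesis using j unfolding idem_ranges_def proj_tuple_def by simp
  qed
qed

lemma bij_betw_proj_tuple:
  assumes dims: "\<forall>A\<in>set As. A \<in> carrier_mat n n" and sym: "\<forall>A\<in>set As. transpose_mat A = A"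
  shows "bij_betw (proj_tuple n t) (block_decomps n As t) (orth_idems n As t)"
  by (rule bij_betw_byWitness[where f' = "idem_ranges n t"])
     (use idem_ranges_proj_tuple proj_tuple_idem_ranges[OF _ dims sym]
       proj_tuple_in_orth_idems[OF _ dims sym] idem_ranges_in_block_decomps[OF _ dims sym] in auto)

section \<open>Block diagonal matrices\<close>

fun block_index :: "nat list \<Rightarrow> nat \<Rightarrow> nat" where
  "block_index [] a = 0"
| "block_index (m # ns) a = (if a < m then 0 else Suc (block_index ns (a - m)))"

lemma block_index_less: "a < sum_list ns \<Longrightarrow> block_index ns a < length ns"
  by (induction ns arbitrary: a) auto

lemma block_index_surj: "j < length ns \<Longrightarrow> ns ! j \<ge> 1 \<Longrightarrow> \<exists>a<sum_list ns. block_index ns a = j"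
proof (induction ns arbitrary: j)
  case (Cons m ns)
  show ?case
  proof (cases j)
    case 0
    then show ?thesis using Cons.prems by (intro exI[of _ 0]) auto
  next
    case (Suc j')
    with Cons.prems Cons.IH[of j'] obtain a where "a < sum_list ns" "block_index ns a = j'" by auto
    then show ?thesis using Suc by (intro exI[of _ "m + a"]) auto
  qed
qed simp

lemma concat_nth_block_index:
  "a < length (concat xss) \<Longrightarrow> concat xss ! a \<in> set (xss ! block_index (map length xss) a)"
  by (induction xss arbitrary: a) (auto simp: nth_append)

abbreviation square_blocks :: "'a mat list \<Rightarrow> nat list \<Rightarrow> bool" where
  "square_blocks Bs ns \<equiv> list_all2 (\<lambda>B m. B \<in> carrier_mat m m) Bs ns"

lemma diag_block_mat_carrier:
  "square_blocks Bs ns \<Longrightarrow> diag_block_mat Bs \<in> carrier_mat (sum_list ns) (sum_list ns)"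
  by (induction Bs ns rule: list_all2_induct) (auto simp: Let_def)

lemma index_diag_block_mat_Cons:
  assumes "B \<in> carrier_mat m m" "square_blocks Bs ns" "a < m + sum_list ns" "b < m + sum_list ns"
  shows "diag_block_mat (B # Bs) $$ (a,b) =
    (if a < m then if b < m then B $$ (a,b) else 0
     else if b < m then 0 else diag_block_mat Bs $$ (a - m, b - m))"
  using assms diag_block_mat_carrier[OF assms(2)] by (auto simp: Let_def)

lemma diag_block_mat_off_block:
  "square_blocks Bs ns \<Longrightarrow> a < sum_list ns \<Longrightarrow> b < sum_list ns \<Longrightarrow>
   block_index ns a \<noteq> block_index ns b \<Longrightarrow> diag_block_mat Bs $$ (a,b) = 0"
proof (induction Bs ns arbitrary: a b rule: list_all2_induct)
  case (Cons B Bs m ns)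
  then show ?case by (subst index_diag_block_mat_Cons) auto
qed simp

lemma block_diagonal_eq_diag_block_mat:
  fixes M :: "'a::zero mat"
  assumes "M \<in> carrier_mat (sum_list ns) (sum_list ns)"
    and "\<And>a b. a < sum_list ns \<Longrightarrow> b < sum_list ns \<Longrightarrow> block_index ns a \<noteq> block_index ns b \<Longrightarrow> M $$ (a,b) = 0"
  shows "\<exists>Bs. square_blocks Bs ns \<and> M = diag_block_mat Bs"
  using assms
proof (induction ns arbitrary: M)
  case Nil
  then have "M = diag_block_mat []" by (intro eq_matI) auto
  then show ?case by auto
next
  case (Cons m ns)
  let ?s = "sum_list ns"
  define B where "B = mat m m (\<lambda>(i,j). M $$ (i,j))"
  define M' where "M' = mat ?s ?s (\<lambda>(i,j). M $$ (i + m, j + m))"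
  have "\<exists>Bs. square_blocks Bs ns \<and> M' = diag_block_mat Bs"
    by (rule Cons.IH) (use Cons.prems(2)[of "_ + m" "_ + m"] in \<open>auto simp: M'_def\<close>)
  then obtain Bs where Bs: "square_blocks Bs ns" "M' = diag_block_mat Bs" by blast
  have B: "B \<in> carrier_mat m m" unfolding B_def by simp
  have "M = diag_block_mat (B # Bs)"
  proof (rule eq_matI)
    fix i j assume "i < dim_row (diag_block_mat (B # Bs))" "j < dim_col (diag_block_mat (B # Bs))"
    then have ij: "i < m + ?s" "j < m + ?s"
      using diag_block_mat_carrier[of "B # Bs" "m # ns"] B Bs(1) by auto
    then show "M $$ (i,j) = diag_block_mat (B # Bs) $$ (i,j)"
      using Cons.prems(2)[of i j]
      by (subst index_diag_block_mat_Cons[OF B Bs(1) ij]) (auto simp: B_def Bs(2)[symmetric] M'_def)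
  qed (use Cons.prems(1) diag_block_mat_carrier[of "B # Bs" "m # ns"] B Bs(1) in auto)
  then show ?case using B Bs(1) by blast
qed

definition block_indicator :: "nat \<Rightarrow> nat list \<Rightarrow> nat \<Rightarrow> 'a::zero_neq_one mat" where
  "block_indicator n ns j = mat n n (\<lambda>(a,b). if a = b \<and> block_index ns a = j then 1 else 0)"

lemma block_indicator_carrier [simp]: "block_indicator n ns j \<in> carrier_mat n n"
  and dim_block_indicator [simp]:
    "dim_row (block_indicator n ns j) = n" "dim_col (block_indicator n ns j) = n"
  unfolding block_indicator_def by simp_all

lemma index_block_indicator [simp]:
  "a < n \<Longrightarrow> b < n \<Longrightarrow>
   block_indicator n ns j $$ (a,b) = (if a = b \<and> block_index ns a = j then 1 else 0)"
  unfolding block_indicator_def by simp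

lemma row_block_indicator [simp]:
  "a < n \<Longrightarrow> row (block_indicator n ns j) a =
     (if block_index ns a = j then unit_vec n a else (0\<^sub>v n :: 'a::zero_neq_one vec))"
  by (rule eq_vecI) (auto simp: block_indicator_def)

lemma col_block_indicator [simp]:
  "b < n \<Longrightarrow> col (block_indicator n ns j) b =
     (if block_index ns b = j then unit_vec n b else (0\<^sub>v n :: 'a::zero_neq_one vec))"
  by (rule eq_vecI) (auto simp: block_indicator_def)

lemma block_indicator_mult:
  "block_indicator n ns j * block_indicator n ns l =
   (if j = l then block_indicator n ns j else (0\<^sub>m n n :: 'a::semiring_1 mat))"
  by (rule eq_matI) auto

lemma block_indicator_commute:
  fixes M :: "'a::semiring_1 mat"
  assumes M: "M \<in> carrier_mat n n"
    and off: "\<And>a b. a < n \<Longrightarrow> b < n \<Longrightarrow> block_index ns a \<noteq> block_index ns b \<Longrightarrow> M $$ (a,b) = 0"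
  shows "M * block_indicator n ns j = block_indicator n ns j * M"
  by (rule eq_matI) (use M off in \<open>auto simp: scalar_prod_left_unit scalar_prod_right_unit\<close>)

lemma transpose_block_indicator: "transpose_mat (block_indicator n ns j) = block_indicator n ns j"
  by (rule eq_matI) (auto simp: block_indicator_def)

lemma msum_block_indicator:
  assumes "sum_list ns = n" "length ns = t"
  shows "msum n (block_indicator n ns) {..<t} = (1\<^sub>m n :: 'a::semiring_1 mat)"
proof (rule eq_matI)
  fix a b assume "a < dim_row (1\<^sub>m n :: 'a mat)" "b < dim_col (1\<^sub>m n :: 'a mat)"
  then have ab: "a < n" "b < n" by auto
  then have "block_index ns a < t" "block_index ns b < t" using block_index_less assms by auto
  then show "msum n (block_indicator n ns) {..<t} $$ (a,b) = 1\<^sub>m n $$ (a,b)"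
    using ab by simp
qed auto

lemma block_indicator_nonzero:
  assumes "sum_list ns = n" "j < length ns" "ns ! j \<ge> 1"
  shows "block_indicator n ns j \<noteq> (0\<^sub>m n n :: 'a::zero_neq_one mat)"
proof -
  obtain a where "a < n" "block_index ns a = j" using block_index_surj assms by blast
  then have "block_indicator n ns j $$ (a,a) = (1::'a)" by simp
  moreover have "(0\<^sub>m n n :: 'a mat) $$ (a,a) = 0" using \<open>a < n\<close> by simp
  ultimately show ?thesis by auto
qed

section \<open>Idempotents from a block diagonal congruence\<close>

lemma msum_conjugate:
  fixes P Q :: "'a::comm_ring_1 mat"
  assumes P: "P \<in> carrier_mat n n" and Q: "Q \<in> carrier_mat n n"
    and f: "\<And>j. j \<in> J \<Longrightarrow> f j \<in> carrier_mat n n"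
  shows "msum n (\<lambda>j. P * f j * Q) J = P * msum n f J * Q"
proof (rule mat_eqI_mult_vec[of _ n n])
  fix v :: "'a vec" assume v: "v \<in> carrier_vec n"
  have Qv: "Q *\<^sub>v v \<in> carrier_vec n" using Q v by simp
  have "msum n (\<lambda>j. P * f j * Q) J *\<^sub>v v = vsum n (\<lambda>j. (P * f j * Q) *\<^sub>v v) J"
    by (rule msum_mult_mat_vec) (use P Q f v in auto)
  also have "\<dots> = vsum n (\<lambda>j. P *\<^sub>v (f j *\<^sub>v (Q *\<^sub>v v))) J"
  proof (rule vsum_cong)
    fix j assume "j \<in> J"
    then show "(P * f j * Q) *\<^sub>v v = P *\<^sub>v (f j *\<^sub>v (Q *\<^sub>v v))"
      using P Q f[of j] v by (simp add: assoc_mult_mat_vec[of _ n n _ n])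
  qed
  also have "\<dots> = P *\<^sub>v vsum n (\<lambda>j. f j *\<^sub>v (Q *\<^sub>v v)) J"
    by (rule mult_mat_vec_vsum[OF P, symmetric]) (use f Qv in \<open>auto intro: mult_mat_vec_carrier\<close>)
  also have "\<dots> = P *\<^sub>v (msum n f J *\<^sub>v (Q *\<^sub>v v))"
    using msum_mult_mat_vec[OF f Qv] by simp
  also have "\<dots> = (P * msum n f J * Q) *\<^sub>v v"
    using P Q v by (simp add: assoc_mult_mat_vec[of _ n n _ n])
  finally show "msum n (\<lambda>j. P * f j * Q) J *\<^sub>v v = (P * msum n f J * Q) *\<^sub>v v" .
qed (use P Q in auto)

locale inverse_mats =
  fixes n :: nat and P Q :: "'a::field mat"
  assumes P: "P \<in> carrier_mat n n" and Q: "Q \<in> carrier_mat n n"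
    and PQ: "P * Q = 1\<^sub>m n" and QP: "Q * P = 1\<^sub>m n"
begin

lemma cancel: "Z \<in> carrier_mat n n \<Longrightarrow> Q * (P * Z) = Z"
  and cancel_transpose: "Z \<in> carrier_mat n n \<Longrightarrow> transpose_mat Q * (transpose_mat P * Z) = Z"
proof -
  assume Z: "Z \<in> carrier_mat n n"
  show "Q * (P * Z) = Z" using P Q Z by (simp add: assoc_mult_mat[of Q n n P n Z n, symmetric] QP)
  have "transpose_mat Q * transpose_mat P = 1\<^sub>m n" using transpose_mult[OF P Q] PQ by simp
  then show "transpose_mat Q * (transpose_mat P * Z) = Z"
    using P Q Z by (simp add: assoc_mult_mat[of "transpose_mat Q" n n "transpose_mat P" n Z n, symmetric])
qed

lemma conjugate_mult:
  "X \<in> carrier_mat n n \<Longrightarrow> Y \<in> carrier_mat n n \<Longrightarrow> (P * X * Q) * (P * Y * Q) = P * (X * Y) * Q"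
  using P Q by (simp add: assoc_mult_mat[of _ n n _ n _ n] cancel)

lemma conjugate_nonzero:
  assumes X: "X \<in> carrier_mat n n" and "X \<noteq> 0\<^sub>m n n"
  shows "P * X * Q \<noteq> 0\<^sub>m n n"
proof
  assume "P * X * Q = 0\<^sub>m n n"
  then have "Q * (P * X * Q) * P = 0\<^sub>m n n" using P Q by simp
  moreover have "Q * (P * X * Q) * P = X"
    using P Q X by (simp add: assoc_mult_mat[of _ n n _ n _ n] cancel) (simp add: QP)
  ultimately show False using \<open>X \<noteq> 0\<^sub>m n n\<close> by simp
qed

lemma congruence_center:
  assumes dims: "\<forall>A\<in>set As. A \<in> carrier_mat n n"
    and X: "X \<in> center n (map (\<lambda>A. transpose_mat P * A * P) As)"
  shows "P * X * Q \<in> center n As"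
  unfolding center_def
proof (intro CollectI conjI ballI)
  have Xc: "X \<in> carrier_mat n n" using X unfolding center_def by simp
  then show "P * X * Q \<in> carrier_mat n n" using P Q by simp
  fix A assume A: "A \<in> set As"
  have Ac: "A \<in> carrier_mat n n" using dims A by blast
  let ?Y = "transpose_mat P * A * P * X"
  have Yc: "?Y \<in> carrier_mat n n" using P Ac Xc by (meson mult_carrier_mat transpose_carrier_mat)
  have Ysym: "transpose_mat ?Y = ?Y" using X A unfolding center_def by auto
  have "A * (P * X * Q) = transpose_mat Q * ?Y * Q"
    using P Q Ac Xc by (simp add: assoc_mult_mat[of _ n n _ n _ n] cancel_transpose)
  moreover have "transpose_mat (transpose_mat Q * ?Y * Q) = transpose_mat Q * transpose_mat ?Y * Q"
    using Q Yc by (simp add: transpose_mult[of _ n n _ n] assoc_mult_mat[of _ n n _ n _ n])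
  ultimately show "transpose_mat (A * (P * X * Q)) = A * (P * X * Q)" using Ysym by simp
qed

lemma congruence_orth_idems:
  assumes dims: "\<forall>A\<in>set As. A \<in> carrier_mat n n"
    and e: "e \<in> orth_idems n (map (\<lambda>A. transpose_mat P * A * P) As) t"
  shows "(\<lambda>j\<in>{..<t}. P * e j * Q) \<in> orth_idems n As t"
proof -
  note ec = orth_idems_carrier[OF e]
  have "e j \<in> center n (map (\<lambda>A. transpose_mat P * A * P) As)" if "j < t" for j
    using orth_idemsD(1)[OF e] that by auto
  then have center: "P * e j * Q \<in> center n As" if "j < t" for j
    using congruence_center[OF dims] that by blast
  have "msum n (\<lambda>j\<in>{..<t}. P * e j * Q) {..<t} = P * msum n e {..<t} * Q"
    unfolding msum_restrict by (rule msum_conjugate[OF P Q]) (use ec in auto)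
  also have "\<dots> = 1\<^sub>m n" using orth_idemsD(5)[OF e] P Q PQ by simp
  finally show ?thesis
    unfolding orth_idems_def
    using orth_idemsD(3,4)[OF e] conjugate_mult[OF ec ec] conjugate_nonzero[OF ec orth_idemsD(2)[OF e]]
      center P Q
    by auto
qed

end

lemma invertible_mat_inverse_mats:
  fixes P :: "'a::field mat"
  assumes P: "P \<in> carrier_mat n n" and inv: "invertible_mat P"
  shows "\<exists>Q. inverse_mats n P Q"
proof -
  from inv obtain Q where PQ: "P * Q = 1\<^sub>m (dim_row P)" and QP: "Q * P = 1\<^sub>m (dim_row Q)"
    unfolding invertible_mat_def inverts_mat_def by blast
  then have "Q \<in> carrier_mat n n" using P by (metis carrier_matD carrier_matI index_mult_mat(2,3) index_one_mat(2,3))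
  then show ?thesis using PQ QP P by (intro exI inverse_mats.intro) auto
qed

lemma block_indicators_orth_idems:
  fixes Bs :: "'a::field mat list"
  assumes dims: "\<forall>B\<in>set Bs. B \<in> carrier_mat n n" and sym: "\<forall>B\<in>set Bs. transpose_mat B = B"
    and off: "\<And>B a b. B \<in> set Bs \<Longrightarrow> a < n \<Longrightarrow> b < n \<Longrightarrow> block_index ns a \<noteq> block_index ns b \<Longrightarrow> B $$ (a,b) = 0"
    and ns: "length ns = t" "\<forall>j<t. ns ! j \<ge> 1" "sum_list ns = n"
  shows "(\<lambda>j\<in>{..<t}. block_indicator n ns j) \<in> orth_idems n Bs t"
proof -
  have center: "block_indicator n ns j \<in> center n Bs" for j
    unfolding center_def
  proof (intro CollectI conjI ballI)
    fix B assume B: "B \<in> set Bs"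
    then have Bc: "B \<in> carrier_mat n n" using dims by blast
    have "transpose_mat (B * block_indicator n ns j) = block_indicator n ns j * B"
      using transpose_mult[OF Bc block_indicator_carrier] sym B by (simp add: transpose_block_indicator)
    also have "\<dots> = B * block_indicator n ns j"
      using block_indicator_commute[OF Bc off[OF B]] by simp
    finally show "transpose_mat (B * block_indicator n ns j) = B * block_indicator n ns j" .
  qed simp
  have "block_indicator n ns j \<noteq> 0\<^sub>m n n" if "j < t" for j
    using block_indicator_nonzero[OF ns(3)] ns(1,2) that by auto
  then show ?thesis
    unfolding orth_idems_def
    using center block_indicator_mult msum_block_indicator[OF ns(3,1)] by auto
qed

lemma congruent_block_diagonal_orth_idems:
  fixes As :: "'a::field mat list"
  assumes dims: "\<forall>A\<in>set As. A \<in> carrier_mat n n" and sym: "\<forall>A\<in>set As. transpose_mat A = A"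
    and P: "P \<in> carrier_mat n n" "invertible_mat P"
    and ns: "length ns = t" "\<forall>j<t. ns ! j \<ge> 1" "sum_list ns = n"
    and blocks: "\<forall>A\<in>set As. \<exists>Bs. length Bs = t \<and> (\<forall>j<t. Bs ! j \<in> carrier_mat (ns ! j) (ns ! j)) \<and>
            transpose_mat P * A * P = diag_block_mat Bs"
  shows "orth_idems n As t \<noteq> {}"
proof -
  obtain Q where PQ: "inverse_mats n P Q" using invertible_mat_inverse_mats[OF P] by blast
  let ?Bs = "map (\<lambda>A. transpose_mat P * A * P) As"
  have "(\<lambda>j\<in>{..<t}. block_indicator n ns j) \<in> orth_idems n ?Bs t"
  proof (rule block_indicators_orth_idems[OF _ _ _ ns])
    show "\<forall>B\<in>set ?Bs. B \<in> carrier_mat n n" using dims P by auto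
    show "\<forall>B\<in>set ?Bs. transpose_mat B = B"
      using dims sym P by (auto simp: transpose_mult[of _ n n _ n] assoc_mult_mat[of _ n n _ n _ n])
    fix B a b assume "B \<in> set ?Bs" "a < n" "b < n" "block_index ns a \<noteq> block_index ns b"
    then show "B $$ (a,b) = 0"
      using blocks ns(1,3) diag_block_mat_off_block[of _ ns a b] by (force simp: list_all2_conv_all_nth)
  qed
  then show ?thesis using inverse_mats.congruence_orth_idems[OF PQ dims] by blast
qed


section \<open>A block diagonal congruence from bases of the blocks\<close>

lemma minus_eq_zero_vec_iff:
  fixes x y :: "'a::group_add vec"
  assumes "x \<in> carrier_vec n" "y \<in> carrier_vec n"
  shows "x - y = 0\<^sub>v n \<longleftrightarrow> x = y"
proof
  assume xy: "x - y = 0\<^sub>v n"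
  show "x = y"
  proof (rule eq_vecI)
    fix i assume i: "i < dim_vec y"
    have "x $ i - y $ i = (x - y) $ i" using assms i by simp
    also have "\<dots> = 0" using xy assms i by simp
    finally show "x $ i = y $ i" by simp
  qed (use assms in simp)
qed (use assms in simp)

lemma block_eq_mat_kernel:
  assumes V: "V \<in> block_decomps n As t" and j: "j < t"
  shows "V j = mat_kernel (1\<^sub>m n - proj_mat n V t j)"
proof -
  have kernel: "x \<in> mat_kernel (1\<^sub>m n - proj_mat n V t j) \<longleftrightarrow> x \<in> carrier_vec n \<and> proj_mat n V t j *\<^sub>v x = x"
    for x :: "'a vec"
  proof (cases "x \<in> carrier_vec n")
    case True
    then have "(1\<^sub>m n - proj_mat n V t j) *\<^sub>v x = x - proj_mat n V t j *\<^sub>v x"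
      by (simp add: minus_mult_distrib_mat_vec[of _ n n])
    then show ?thesis using True minus_eq_zero_vec_iff[OF True, of "proj_mat n V t j *\<^sub>v x"]
      unfolding mat_kernel_def by auto
  qed (simp add: mat_kernel_def)
  show ?thesis
  proof (intro equalityI subsetI)
    fix x assume x: "x \<in> V j"
    then show "x \<in> mat_kernel (1\<^sub>m n - proj_mat n V t j)"
      using kernel block_decomp_carrier[OF V j x] proj_mat_mult_vec_block[OF V j x j] by simp
  next
    fix x assume "x \<in> mat_kernel (1\<^sub>m n - proj_mat n V t j)"
    then have "x \<in> carrier_vec n" "x = proj_mat n V t j *\<^sub>v x" using kernel by auto
    then show "x \<in> V j" using proj_mat_mult_vec_mem[OF V _ j] by metis
  qed
qed

lemma (in kernel) finite_basis:
  "\<exists>B. finite B \<and> B \<subseteq> carrier_vec nc \<and> NC.lin_indpt B \<and> NC.span B = mat_kernel A"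
proof -
  obtain B where fin: "finite B" and "basis B" using kernel_basis_exists[OF A] by blast
  then have B: "lin_indpt B" "span B = mat_kernel A" "B \<subseteq> mat_kernel A"
    unfolding Ker.basis_def by auto
  moreover have "B \<subseteq> carrier_vec nc" using B(3) mat_kernel_carrier[OF A] by blast
  ultimately show ?thesis using fin lindep_same[OF B(3)] span_same[OF B(3)] by auto
qed

text \<open>Inside \<open>vec_space\<close> the name \<open>V\<close> denotes the ambient module, so decompositions are called \<open>W\<close>.\<close>

context vec_space
begin

lemma is_subspace_span:
  assumes S: "S \<subseteq> carrier_vec n"
  shows "is_subspace n (span S)"
  unfolding is_subspace_def
proof (intro conjI ballI allI)
  show "span S \<subseteq> carrier_vec n" using span_is_subset2[OF S] by simp
  show "0\<^sub>v n \<in> span S" using span_empty span_is_monotone[of "{}" S] by auto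
  show "x + y \<in> span S" if "x \<in> span S" "y \<in> span S" for x y
    using span_add1[OF S that] by simp
  show "c \<cdot>\<^sub>v x \<in> span S" if "x \<in> span S" for c x
    using submodule.smult_closed[OF span_is_submodule[OF S], of c x] that by simp
qed

lemma block_decomp_bases:
  assumes W: "W \<in> block_decomps n As t"
  obtains B where "\<And>j. j < t \<Longrightarrow> finite (B j) \<and> B j \<subseteq> carrier_vec n \<and> lin_indpt (B j) \<and> span (B j) = W j"
proof -
  have "\<forall>j\<in>{..<t}. \<exists>B. finite B \<and> B \<subseteq> carrier_vec n \<and> lin_indpt B \<and> span B = W j"
  proof
    fix j assume "j \<in> {..<t}"
    then have j: "j < t" by simp
    interpret K: kernel n n "1\<^sub>m n - proj_mat n W t j"
      by unfold_locales (rule minus_carrier_mat[OF proj_mat_carrier])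
    show "\<exists>B. finite B \<and> B \<subseteq> carrier_vec n \<and> lin_indpt B \<and> span B = W j"
      using K.finite_basis block_eq_mat_kernel[OF W j] by simp
  qed
  from bchoice[OF this] obtain B
    where "\<forall>j\<in>{..<t}. finite (B j) \<and> B j \<subseteq> carrier_vec n \<and> lin_indpt (B j) \<and> span (B j) = W j"
    by blast
  then show ?thesis using that[of B] by simp
qed

lemma lincomb_in_span: "finite S \<Longrightarrow> lincomb a S \<in> span S"
  unfolding span_def by blast

lemma lincomb_UN:
  assumes fin: "\<And>j. j < t \<Longrightarrow> finite (B j)" and carr: "\<And>j. j < t \<Longrightarrow> B j \<subseteq> carrier_vec n"
    and disj: "\<And>j l. j < t \<Longrightarrow> l < t \<Longrightarrow> j \<noteq> l \<Longrightarrow> B j \<inter> B l = {}"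
  shows "lincomb a (\<Union>j<t. B j) = vsum n (\<lambda>j. lincomb a (B j)) {..<t}"
proof -
  have U: "finite (\<Union>j<t. B j)" "(\<Union>j<t. B j) \<subseteq> carrier_vec n" using fin carr by auto
  show ?thesis
  proof (rule eq_vecI)
    fix i assume "i < dim_vec (vsum n (\<lambda>j. lincomb a (B j)) {..<t})"
    then have i: "i < n" by simp
    have "lincomb a (\<Union>j<t. B j) $ i = (\<Sum>u\<in>(\<Union>j<t. B j). a u * u $ i)"
      by (rule lincomb_index[OF i U(2)])
    also have "\<dots> = (\<Sum>j<t. \<Sum>u\<in>B j. a u * u $ i)"
      by (rule sum.UNION_disjoint) (use fin disj in auto)
    also have "\<dots> = vsum n (\<lambda>j. lincomb a (B j)) {..<t} $ i"
      using i carr by (simp add: lincomb_index)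
    finally show "lincomb a (\<Union>j<t. B j) $ i = vsum n (\<lambda>j. lincomb a (B j)) {..<t} $ i" .
  qed (simp add: lincomb_dim[OF U])
qed

lemma block_decomp_bases_union:
  assumes W: "W \<in> block_decomps n As t"
    and B: "\<And>j. j < t \<Longrightarrow> finite (B j) \<and> B j \<subseteq> carrier_vec n \<and> lin_indpt (B j) \<and> span (B j) = W j"
  shows block_bases_disjoint: "\<And>j l. j < t \<Longrightarrow> l < t \<Longrightarrow> j \<noteq> l \<Longrightarrow> B j \<inter> B l = {}"
    and block_bases_nonempty: "\<And>j. j < t \<Longrightarrow> B j \<noteq> {}"
    and block_bases_union_basis: "basis (\<Union>j<t. B j)"
proof -
  have BW: "B j \<subseteq> W j" if "j < t" for j using in_own_span[of "B j"] B[OF that] by simp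
  show disj: "B j \<inter> B l = {}" if j: "j < t" and l: "l < t" and jl: "j \<noteq> l" for j l
  proof (rule ccontr)
    assume "B j \<inter> B l \<noteq> {}"
    then obtain v where vj: "v \<in> W j" and vl: "v \<in> W l" and v: "v \<in> B j" using BW[OF j] BW[OF l] by blast
    have "v = proj_mat n W t l *\<^sub>v v" by (simp add: proj_mat_mult_vec_block[OF W l vl l])
    also have "\<dots> = 0\<^sub>v n" using jl by (simp add: proj_mat_mult_vec_block[OF W j vj l])
    finally have "0\<^sub>v n \<in> B j" using v by simp
    moreover have "carrier class_ring \<noteq> {\<zero>\<^bsub>class_ring :: 'a ring\<^esub>}"
      by simp (metis UNIV_I singletonD zero_neq_one)
    ultimately show False using zero_nin_lin_indpt[of "B j"] B[OF j] by simp
  qed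
  show "B j \<noteq> {}" if j: "j < t" for j
  proof
    assume "B j = {}"
    then have "W j = {0\<^sub>v n}" using B[OF j] span_empty by simp
    then show False using block_decompsD(3)[OF W j] by contradiction
  qed
  let ?U = "\<Union>j<t. B j"
  have Bfin: "finite (B j)" and Bcarr: "B j \<subseteq> carrier_vec n" and Bli: "lin_indpt (B j)"
    and Bspan: "span (B j) = W j" if "j < t" for j
    using B[OF that] by simp_all
  have U: "?U \<subseteq> carrier_vec n" "finite ?U" using Bfin Bcarr by auto
  have zero: "dproj n W t j (0\<^sub>v n) = 0\<^sub>v n" if j: "j < t" for j
  proof -
    have "(\<lambda>j\<in>{..<t}. 0\<^sub>v n) \<in> Pi\<^sub>E {..<t} W"
      using is_subspaceD(2)[OF block_decompsD(2)[OF W]] by simp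
    moreover have "vsum n (\<lambda>j\<in>{..<t}. 0\<^sub>v n) {..<t} = 0\<^sub>v n"
      unfolding vsum_restrict by (rule eq_vecI) simp_all
    ultimately have "dproj n W t j (0\<^sub>v n) = (\<lambda>j\<in>{..<t}. 0\<^sub>v n) j" by (rule dproj_eqI[OF W])
    then show ?thesis using j by simp
  qed
  have "lin_indpt ?U"
  proof (rule finite_lin_indpt2[OF U(2) U(1)])
    fix a assume "lincomb a ?U = 0\<^sub>v n"
    then have sum0: "vsum n (\<lambda>j. lincomb a (B j)) {..<t} = 0\<^sub>v n"
      using lincomb_UN[OF Bfin Bcarr disj] by simp
    \<comment> \<open>the components \<open>lincomb a (B j) \<in> W j\<close> form a decomposition of \<open>0\<close>, hence vanish\<close>
    have lincomb0: "lincomb a (B j) = 0\<^sub>v n" if j: "j < t" for j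
    proof -
      have "(\<lambda>j\<in>{..<t}. lincomb a (B j)) \<in> Pi\<^sub>E {..<t} W"
        using lincomb_in_span[OF Bfin] Bspan by simp
      moreover have "vsum n (\<lambda>j\<in>{..<t}. lincomb a (B j)) {..<t} = 0\<^sub>v n"
        unfolding vsum_restrict by (rule sum0)
      ultimately have "dproj n W t j (0\<^sub>v n) = (\<lambda>j\<in>{..<t}. lincomb a (B j)) j"
        by (rule dproj_eqI[OF W])
      then show ?thesis using zero[OF j] j by simp
    qed
    show "\<forall>v\<in>?U. a v = 0"
    proof
      fix v assume "v \<in> ?U"
      then obtain j where j: "j < t" and v: "v \<in> B j" by blast
      have "a \<in> B j \<rightarrow> {0}"
        using not_lindepD[OF Bli[OF j] Bfin[OF j] subset_refl] lincomb0[OF j] by simp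
      then show "a v = 0" using v by auto
    qed
  qed
  moreover have "span ?U = carrier_vec n"
  proof (intro equalityI subsetI)
    fix x assume "x \<in> span ?U"
    then show "x \<in> carrier_vec n" using span_closed[OF _ \<open>x \<in> span ?U\<close>] U(1) by simp
  next
    fix x :: "'a vec" assume x: "x \<in> carrier_vec n"
    have "proj_mat n W t j *\<^sub>v x \<in> span ?U" if j: "j < t" for j
      using proj_mat_mult_vec_mem[OF W x j] Bspan[OF j] span_is_monotone[of "B j" ?U] j by blast
    then have "vsum n (\<lambda>j. proj_mat n W t j *\<^sub>v x) {..<t} \<in> span ?U"
      by (intro subspace_vsum[OF is_subspace_span[OF U(1)]]) simp_all
    then show "x \<in> span ?U" using vsum_proj_mat_mult_vec[OF W x] by simp
  qed
  ultimately show "basis ?U" unfolding basis_def using U by simp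
qed

lemma mat_of_cols_basis_invertible:
  assumes ws: "set ws \<subseteq> carrier_vec n" "distinct ws" "length ws = n" and bas: "basis (set ws)"
  shows "invertible_mat (mat_of_cols n ws)"
proof -
  let ?P = "mat_of_cols n ws"
  have P: "?P \<in> carrier_mat n n" using mat_of_cols_carrier(1)[of n ws] ws(3) by simp
  have "rank ?P = n"
    using lin_indpt_full_rank[OF P] ws bas unfolding basis_def by simp
  then have "det ?P \<noteq> 0" using det_rank_iff[OF P] by simp
  from det_non_zero_imp_unit[OF P this, of "()"]
  obtain Q where "Q \<in> carrier_mat n n" "Q * ?P = 1\<^sub>m n" "?P * Q = 1\<^sub>m n"
    unfolding Units_def ring_mat_def by auto
  then show ?thesis
    using P unfolding invertible_mat_def inverts_mat_def by (intro conjI exI[of _ Q]) auto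
qed

end

lemma index_congruence_mat_of_cols:
  fixes A :: "'a::comm_ring_1 mat"
  assumes A: "A \<in> carrier_mat n n" and ws: "set ws \<subseteq> carrier_vec n"
    and a: "a < length ws" and b: "b < length ws"
  shows "(transpose_mat (mat_of_cols n ws) * A * mat_of_cols n ws) $$ (a,b) = ws ! a \<bullet> (A *\<^sub>v ws ! b)"
proof -
  let ?m = "length ws" and ?P = "mat_of_cols n ws"
  have P: "?P \<in> carrier_mat n ?m" by simp
  have Pe: "?P *\<^sub>v unit_vec ?m k = ws ! k" if k: "k < ?m" for k
  proof -
    have "ws ! k \<in> carrier_vec n" using ws k nth_mem by blast
    then show ?thesis
      using k by (intro eq_vecI) (auto simp: index_mult_mat_vec_unit_vec[OF P] mat_of_cols_index)
  qed
  have w: "A *\<^sub>v ws ! b \<in> carrier_vec n" using A ws b nth_mem by (blast intro: mult_mat_vec_carrier)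
  have "(transpose_mat ?P * A * ?P) $$ (a,b) = unit_vec ?m a \<bullet> ((transpose_mat ?P * A * ?P) *\<^sub>v unit_vec ?m b)"
    by (rule index_mat_eq_scalar_prod_unit_vec) (use A P a b in \<open>meson mult_carrier_mat transpose_carrier_mat\<close>)+
  also have "(transpose_mat ?P * A * ?P) *\<^sub>v unit_vec ?m b = (transpose_mat ?P * A) *\<^sub>v (?P *\<^sub>v unit_vec ?m b)"
    by (rule assoc_mult_mat_vec) (use A in auto)
  also have "\<dots> = transpose_mat ?P *\<^sub>v (A *\<^sub>v ws ! b)"
    using A Pe[OF b] assoc_mult_mat_vec[of "transpose_mat ?P" ?m n A n "ws ! b"] ws b nth_mem by auto
  also have "unit_vec ?m a \<bullet> (transpose_mat ?P *\<^sub>v (A *\<^sub>v ws ! b)) = ws ! a \<bullet> (A *\<^sub>v ws ! b)"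
    using transpose_vec_mult_scalar[of "transpose_mat ?P" ?m n "A *\<^sub>v ws ! b" "unit_vec ?m a"] w a
    by (simp add: Pe)
  finally show ?thesis .
qed

lemma block_decomp_congruent_block_diagonal:
  fixes As :: "'a::field mat list"
  assumes V: "V \<in> block_decomps n As t" and dims: "\<forall>A\<in>set As. A \<in> carrier_mat n n"
  shows "\<exists>P ns. P \<in> carrier_mat n n \<and> invertible_mat P \<and> length ns = t \<and>
        (\<forall>j<t. ns ! j \<ge> 1) \<and> sum_list ns = n \<and>
        (\<forall>A\<in>set As. \<exists>Bs. length Bs = t \<and> (\<forall>j<t. Bs ! j \<in> carrier_mat (ns ! j) (ns ! j)) \<and>
            transpose_mat P * A * P = diag_block_mat Bs)"
proof -
  interpret vec_space "TYPE('a)" n .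
  obtain B where B: "\<And>j. j < t \<Longrightarrow> finite (B j) \<and> B j \<subseteq> carrier_vec n \<and> lin_indpt (B j) \<and> span (B j) = V j"
    using block_decomp_bases[OF V] by blast
  note disj = block_bases_disjoint[OF V B] and basis = block_bases_union_basis[OF V B]
  define L where "L j = (SOME xs. set xs = B j \<and> distinct xs)" for j
  have L: "set (L j) = B j \<and> distinct (L j)" if "j < t" for j
    unfolding L_def by (rule someI_ex, rule finite_distinct_list) (use B[OF that] in simp)
  define Ls where "Ls = map L [0..<t]"
  define ns where "ns = map length Ls"
  define ws where "ws = concat Ls"
  have ns_len: "length ns = t" by (simp add: ns_def Ls_def)
  have ns_nth: "ns ! j = card (B j)" if "j < t" for j
    using L[OF that] that distinct_card by (fastforce simp: ns_def Ls_def)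
  have set_ws: "set ws = (\<Union>j<t. B j)"
    using L by (auto simp: ws_def Ls_def)
  have "card (\<Union>j<t. B j) = n"
    using basis dim_basis[of "\<Union>j<t. B j"] dim_is_n B by auto
  moreover have "card (\<Union>j<t. B j) = sum_list ns"
  proof -
    have "card (\<Union>j<t. B j) = (\<Sum>j<t. card (B j))"
      by (rule card_UN_disjoint) (use B disj in auto)
    also have "\<dots> = sum_list ns"
      using ns_len ns_nth by (simp add: sum_list_sum_nth lessThan_atLeast0)
    finally show ?thesis .
  qed
  ultimately have sum_ns: "sum_list ns = n" by simp
  have len_ws: "length ws = n" using sum_ns by (simp add: ws_def ns_def length_concat)
  have dist_ws: "distinct ws"
    using \<open>card (\<Union>j<t. B j) = n\<close> len_ws set_ws by (metis card_distinct)
  have ws_carrier: "set ws \<subseteq> carrier_vec n" using set_ws B by auto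
  define P where "P = mat_of_cols n ws"
  have P: "P \<in> carrier_mat n n" "invertible_mat P"
    using mat_of_cols_basis_invertible[OF ws_carrier dist_ws len_ws] basis set_ws len_ws
    by (auto simp: P_def)
  have ws_block: "ws ! a \<in> V (block_index ns a) \<and> block_index ns a < t" if "a < n" for a
  proof -
    have "block_index ns a < t" using block_index_less[of a ns] that sum_ns ns_len by simp
    moreover have "ws ! a \<in> set (Ls ! block_index ns a)"
      using concat_nth_block_index[of a Ls] that len_ws by (simp add: ws_def ns_def)
    moreover have "B j \<subseteq> V j" if "j < t" for j using in_own_span[of "B j"] B[OF that] by simp
    ultimately show ?thesis using L by (auto simp: Ls_def)
  qed
  have "\<exists>Bs. length Bs = t \<and> (\<forall>j<t. Bs ! j \<in> carrier_mat (ns ! j) (ns ! j)) \<and>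
      transpose_mat P * A * P = diag_block_mat Bs" if A: "A \<in> set As" for A
  proof -
    have Ac: "A \<in> carrier_mat n n" using dims A by blast
    have "\<exists>Bs. square_blocks Bs ns \<and> transpose_mat P * A * P = diag_block_mat Bs"
    proof (rule block_diagonal_eq_diag_block_mat)
      show "transpose_mat P * A * P \<in> carrier_mat (sum_list ns) (sum_list ns)"
        using P(1) Ac sum_ns by simp
      fix a b assume "a < sum_list ns" "b < sum_list ns" and ab: "block_index ns a \<noteq> block_index ns b"
      then have a: "a < n" and b: "b < n" using sum_ns by auto
      have "(transpose_mat P * A * P) $$ (a,b) = ws ! a \<bullet> (A *\<^sub>v ws ! b)"
        unfolding P_def by (rule index_congruence_mat_of_cols[OF Ac ws_carrier]) (use a b len_ws in simp_all)
      also have "\<dots> = 0"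
        using block_decompsD(5)[OF V A _ _ ab] ws_block[OF a] ws_block[OF b] by simp
      finally show "(transpose_mat P * A * P) $$ (a,b) = 0" .
    qed
    then show ?thesis using ns_len by (auto simp: list_all2_conv_all_nth)
  qed
  moreover have "ns ! j \<ge> 1" if "j < t" for j
  proof -
    have "card (B j) > 0" using block_bases_nonempty[OF V B that] B[OF that] by (simp add: card_gt_0_iff)
    then show ?thesis using ns_nth[OF that] by simp
  qed
  ultimately show ?thesis using P ns_len sum_ns by (intro exI[of _ P] exI[of _ ns]) simp
qed

theorem mainTheorem1:
  fixes As :: "'k::field mat list" and n t :: nat
  assumes char: "(2::'k) \<noteq> 0"
    and dims: "\<forall>A\<in>set As. A \<in> carrier_mat n n"
    and sym: "\<forall>A\<in>set As. transpose_mat A = A"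
    and t: "t \<ge> 1"
  shows "bij_betw (proj_tuple n t) (block_decomps n As t) (orth_idems n As t) \<and>
    ((\<exists>P ns. P \<in> carrier_mat n n \<and> invertible_mat P \<and> length ns = t \<and>
        (\<forall>j<t. ns ! j \<ge> 1) \<and> sum_list ns = n \<and>
        (\<forall>A\<in>set As. \<exists>Bs. length Bs = t \<and> (\<forall>j<t. Bs ! j \<in> carrier_mat (ns ! j) (ns ! j)) \<and>
            transpose_mat P * A * P = diag_block_mat Bs))
     \<longleftrightarrow> orth_idems n As t \<noteq> {})"
    (is "?bij \<and> (?congruent \<longleftrightarrow> _)")
proof (intro conjI iffI)
  show ?bij by (rule bij_betw_proj_tuple[OF dims sym])
  show "orth_idems n As t \<noteq> {}" if ?congruent
    using that by (elim exE conjE) (rule congruent_block_diagonal_orth_idems[OF dims sym])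
  show ?congruent if nonempty: "orth_idems n As t \<noteq> {}"
  proof -
    obtain e where "e \<in> orth_idems n As t" using nonempty by blast
    then show ?thesis
      by (rule block_decomp_congruent_block_diagonal[OF idem_ranges_in_block_decomps[OF _ dims sym] dims])
  qed
qed

end
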